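(* Let $Z_u > 0$, $Z_{\bar u} \ge 0$, $Z_u^y$ and $Z_{\bar u}^y$ be real numbers with $0 < Z_u^y \le Z_u$ and $0 \le Z_{\bar u}^y \le Z_{\bar u}$, and let $w \ge Z_{\bar u}$. Put $Z_\rho = Z_u + Z_{\bar u}$ and $Z_\rho^y = Z_u^y + Z_{\bar u}^y$. Then \[ \mathrm{KL}\!\left(\mathcal{B}\!\left(\tfrac{Z_u^y}{Z_\rho^y}\right)\,\middle\|\,\mathcal{B}\!\left(\tfrac{Z_u}{Z_\rho}\right)\right) \;\le\; \lg\frac{Z_u + w}{Z_u^y}. \]
   Context: Interpretation (for motivation only): for a leaf $\rho$ of a decision tree, $Z_u, Z_{\bar u}$ are the total boosting weights of assessed (seen) and unassessed (unseen) training examples reaching $\rho$, $Z_u^y, Z_{\bar u}^y$ are the corresponding weights of examples with label $y$, and $w$ is the total unseen weight over all leaves. $\lg$ is the base-2 logarithm with $0\lg 0=0$ and $0\lg(0/0)=0$. $\mathcal{B}(p)$ is the Bernoulli distribution with parameter $p$, and $\mathrm{KL}(\mathcal{B}(p)\|\mathcal{B}(q)) = p\lg\frac{p}{q} + (1-p)\lg\frac{1-p}{1-q}$. *)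

theory Defs
  imports Complex_Main
begin

definition lg :: "real \<Rightarrow> real" where
  "lg x = log 2 x"

definition plg :: "real \<Rightarrow> real \<Rightarrow> real" where
  "plg p q = (if p = 0 then 0 else p * lg (p / q))"

definition KL_bern :: "real \<Rightarrow> real \<Rightarrow> real" where
  "KL_bern p q = plg p q + plg (1 - p) (1 - q)"

end

theory Submission
  imports Defs
begin

text \<open>Every likelihood ratio p/q and (1-p)/(1-q) of the two Bernoulli distributions is at most
  (Zu + Zubar)/Zuy, and KL divergence never exceeds the logarithm of an upper bound on the
  likelihood ratios. Since Zubar \<le> w, the claim follows.\<close>

lemma plg_le_mult_lg:
  assumes "0 \<le> p" and "0 < p \<Longrightarrow> 0 < p / q \<and> p / q \<le> M"
  shows "plg p q \<le> p * lg M"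
proof (cases "p = 0")
  case True
  then show ?thesis by (simp add: plg_def)
next
  case False
  with assms have "0 < p" "0 < p / q" "p / q \<le> M" by auto
  then have "p * lg (p / q) \<le> p * lg M"
    by (intro mult_left_mono) (auto simp: lg_def)
  with False show ?thesis by (simp add: plg_def)
qed

lemma KL_bern_le_lg:
  assumes "0 \<le> p" and "p \<le> 1"
    and "0 < p \<Longrightarrow> 0 < p / q \<and> p / q \<le> M"
    and "p < 1 \<Longrightarrow> 0 < (1 - p) / (1 - q) \<and> (1 - p) / (1 - q) \<le> M"
  shows "KL_bern p q \<le> lg M"
proof -
  have "plg p q \<le> p * lg M"
    using assms(1,3) by (rule plg_le_mult_lg)
  moreover have "plg (1 - p) (1 - q) \<le> (1 - p) * lg M"
    using assms(2,4) by (intro plg_le_mult_lg) auto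
  ultimately show ?thesis
    unfolding KL_bern_def by (simp add: algebra_simps)
qed

lemma share_ratio_first_le:
  fixes a b A B :: real
  assumes "0 < a" "a \<le> A" "0 \<le> b" "0 \<le> B"
  shows "0 < (a / (a + b)) / (A / (A + B)) \<and> (a / (a + b)) / (A / (A + B)) \<le> (A + B) / a"
proof -
  have pos: "0 < (a + b) * A" "0 < A + B"
    using assms by auto
  have "a * a \<le> (a + b) * A"
    using assms by (intro mult_mono) auto
  then have "a * (A + B) * a \<le> (A + B) * ((a + b) * A)"
    using pos by (simp add: mult.commute mult.left_commute mult_left_mono)
  then have "a * (A + B) / ((a + b) * A) \<le> (A + B) / a"
    using pos assms(1) by (simp add: frac_le_eq divide_le_eq le_divide_eq)
  moreover have "(a / (a + b)) / (A / (A + B)) = a * (A + B) / ((a + b) * A)"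
    by simp
  ultimately show ?thesis
    using pos assms(1) by simp
qed

lemma share_ratio_second_le:
  fixes a b A B :: real
  assumes "0 < a" "a \<le> A" "0 < b" "b \<le> B"
  shows "0 < (b / (a + b)) / (B / (A + B)) \<and> (b / (a + b)) / (B / (A + B)) \<le> (A + B) / a"
proof -
  have pos: "0 < (a + b) * B" "0 < A + B"
    using assms by auto
  have "b * a \<le> B * a"
    using assms by (intro mult_right_mono) auto
  also have "\<dots> \<le> (a + b) * B"
    using assms by (simp add: algebra_simps)
  finally have "b * a \<le> (a + b) * B" .
  then have "b * (A + B) * a \<le> (A + B) * ((a + b) * B)"
    using pos by (simp add: mult.commute mult.left_commute mult_left_mono)
  then have "b * (A + B) / ((a + b) * B) \<le> (A + B) / a"
    using pos assms(1) by (simp add: frac_le_eq divide_le_eq le_divide_eq)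
  moreover have "(b / (a + b)) / (B / (A + B)) = b * (A + B) / ((a + b) * B)"
    by simp
  ultimately show ?thesis
    using pos assms by simp
qed

theorem mainTheorem2:
  fixes Zu Zubar Zuy Zubary w :: real
  assumes "Zu > 0" and "Zubar \<ge> 0"
    and "0 < Zuy" and "Zuy \<le> Zu"
    and "0 \<le> Zubary" and "Zubary \<le> Zubar"
    and "w \<ge> Zubar"
  shows "KL_bern (Zuy / (Zuy + Zubary)) (Zu / (Zu + Zubar)) \<le> lg ((Zu + w) / Zuy)"
proof -
  let ?p = "Zuy / (Zuy + Zubary)" and ?q = "Zu / (Zu + Zubar)"
  have p_compl: "1 - ?p = Zubary / (Zuy + Zubary)" and q_compl: "1 - ?q = Zubar / (Zu + Zubar)"
    using assms by (simp_all add: field_simps)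
  have "KL_bern ?p ?q \<le> lg ((Zu + Zubar) / Zuy)"
  proof (rule KL_bern_le_lg)
    show "0 \<le> ?p" "?p \<le> 1"
      using assms by simp_all
    show "0 < ?p / ?q \<and> ?p / ?q \<le> (Zu + Zubar) / Zuy"
      using assms by (intro share_ratio_first_le) auto
    assume "?p < 1"
    then have "0 < Zubary"
      using assms by (cases "Zubary = 0") auto
    then show "0 < (1 - ?p) / (1 - ?q) \<and> (1 - ?p) / (1 - ?q) \<le> (Zu + Zubar) / Zuy"
      unfolding p_compl q_compl using assms by (intro share_ratio_second_le) auto
  qed
  also have "\<dots> \<le> lg ((Zu + w) / Zuy)"
    using assms by (simp add: lg_def divide_right_mono)
  finally show ?thesis .
qed

end
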